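(* Let $R\subset S$ be an integral ring extension that has FIP. Then $R\subset S$ is seminormal if and only if the conductor $(R:S)$ is a semiprime (i.e. radical) ideal of $S$.
   Context: Rings are commutative with identity. $(R:S)=\{r\in R\mid rS\subseteq R\}$. The extension has FIP if the set $[R,S]$ of $R$-subalgebras of $S$ is finite. $R\subseteq S$ is seminormal if for $b\in S$, $b^2,b^3\in R$ implies $b\in R$. *)

theory Defs
  imports Main
begin

text \<open>The overring S is the whole carrier of a type 'a :: comm_ring_1;
  the base ring R is a subring (containing 1) given as a set.\<close>

definition is_subring :: "'a::comm_ring_1 set \<Rightarrow> bool" where
  "is_subring T \<longleftrightarrow> 0 \<in> T \<and> 1 \<in> T \<and>
     (\<forall>x\<in>T. \<forall>y\<in>T. x + y \<in> T \<and> x - y \<in> T \<and> x * y \<in> T)"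

definition integral_ext :: "'a::comm_ring_1 set \<Rightarrow> bool" where
  "integral_ext R \<longleftrightarrow> (\<forall>s::'a. \<exists>n::nat. \<exists>c::nat \<Rightarrow> 'a.
      (\<forall>i<n. c i \<in> R) \<and> s ^ n + (\<Sum>i<n. c i * s ^ i) = 0)"

definition has_FIP :: "'a::comm_ring_1 set \<Rightarrow> bool" where
  "has_FIP R \<longleftrightarrow> finite {T :: 'a set. is_subring T \<and> R \<subseteq> T}"

definition seminormal_ext :: "'a::comm_ring_1 set \<Rightarrow> bool" where
  "seminormal_ext R \<longleftrightarrow> (\<forall>b::'a. b ^ 2 \<in> R \<and> b ^ 3 \<in> R \<longrightarrow> b \<in> R)"

definition conductor :: "'a::comm_ring_1 set \<Rightarrow> 'a set" where
  "conductor R = {r \<in> R. \<forall>s::'a. r * s \<in> R}"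

definition is_ideal :: "'a::comm_ring_1 set \<Rightarrow> bool" where
  "is_ideal I \<longleftrightarrow> 0 \<in> I \<and> (\<forall>x\<in>I. \<forall>y\<in>I. x + y \<in> I) \<and> (\<forall>x\<in>I. \<forall>s. s * x \<in> I)"

definition semiprime_ideal :: "'a::comm_ring_1 set \<Rightarrow> bool" where
  "semiprime_ideal I \<longleftrightarrow> is_ideal I \<and> (\<forall>x::'a. \<forall>n::nat. n \<ge> 1 \<and> x ^ n \<in> I \<longrightarrow> x \<in> I)"

end

theory Submission
  imports Defs
begin

text \<open>
  Seminormality makes the conductor closed under square roots, hence radical.
  Conversely, FIP together with integrality makes S a finitely generated R-module, and FIP applied
  to the chain of subrings R + a^k S yields, for every a \<in> R, a relation a^i S \<subseteq> R + a^(i+1) S;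
  a Nakayama-type argument turns it into (1 - ac) a^N \<in> (R:S) for some c \<in> R.
  If b^2, b^3 \<in> R, take a = b^2: radicality gives a(1 - ac) \<in> (R:S), then (b - b^3 c)^2 = a(1 - ac)^2
  puts b - b^3 c in (R:S) \<subseteq> R, whence b \<in> R.
\<close>

lemma subring_zero: "is_subring R \<Longrightarrow> 0 \<in> R"
  and subring_one: "is_subring R \<Longrightarrow> 1 \<in> R"
  and subring_add: "is_subring R \<Longrightarrow> x \<in> R \<Longrightarrow> y \<in> R \<Longrightarrow> x + y \<in> R"
  and subring_diff: "is_subring R \<Longrightarrow> x \<in> R \<Longrightarrow> y \<in> R \<Longrightarrow> x - y \<in> R"
  and subring_mult: "is_subring R \<Longrightarrow> x \<in> R \<Longrightarrow> y \<in> R \<Longrightarrow> x * y \<in> R"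
  by (simp_all add: is_subring_def)

lemma subring_uminus: "is_subring R \<Longrightarrow> x \<in> R \<Longrightarrow> - x \<in> R"
  using subring_diff[of R 0 x] subring_zero[of R] by simp

lemma conductor_subset: "conductor R \<subseteq> R"
  by (auto simp: conductor_def)

lemma is_ideal_conductor:
  assumes R: "is_subring R"
  shows "is_ideal (conductor R)"
  unfolding is_ideal_def
proof (intro conjI ballI allI)
  show "0 \<in> conductor R"
    using subring_zero[OF R] by (simp add: conductor_def)
next
  fix x y
  assume "x \<in> conductor R" "y \<in> conductor R"
  then show "x + y \<in> conductor R"
    using R by (auto simp: conductor_def distrib_right intro: subring_add)
next
  fix x s
  assume x: "x \<in> conductor R"
  have sxt: "s * x * t \<in> R" for t
  proof -
    have "x * (s * t) \<in> R" using x by (simp add: conductor_def)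
    then show ?thesis by (simp only: ac_simps)
  qed
  then show "s * x \<in> conductor R"
    using sxt[of 1] by (simp add: conductor_def)
qed

lemma ideal_mult: "is_ideal I \<Longrightarrow> x \<in> I \<Longrightarrow> s * x \<in> I"
  by (simp add: is_ideal_def)

lemma semiprime_idealI_power2:
  assumes I: "is_ideal I" and sqrt: "\<And>x. x ^ 2 \<in> I \<Longrightarrow> x \<in> I"
  shows "semiprime_ideal I"
proof -
  have "x \<in> I" if "n \<ge> 1" "x ^ n \<in> I" for n x
    using that
  proof (induction n rule: less_induct)
    case (less n)
    show ?case
    proof (cases "n = 1")
      case True
      then show ?thesis using less by simp
    next
      case False
      then have "n \<ge> 2" using less by simp
      then have "(n - 1) * 2 = (n - 2) + n" by simp
      then have "(x ^ (n - 1)) ^ 2 = x ^ (n - 2) * x ^ n"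
        by (metis power_add power_mult)
      then have "x ^ (n - 1) \<in> I"
        using sqrt ideal_mult[OF I less(3)] by simp
      then show ?thesis using less(1)[of "n - 1"] \<open>n \<ge> 2\<close> by simp
    qed
  qed
  then show ?thesis using I by (auto simp: semiprime_ideal_def)
qed

lemma seminormal_conductor_power2D:
  assumes sn: "seminormal_ext R" and x2: "x ^ 2 \<in> conductor R"
  shows "x \<in> conductor R"
proof -
  have x2t: "x ^ 2 * u \<in> R" for u
    using x2 unfolding conductor_def by blast
  have xt: "x * t \<in> R" for t
  proof -
    have "(x * t) ^ 2 = x ^ 2 * t ^ 2" "(x * t) ^ 3 = x ^ 2 * (x * t ^ 3)"
      by (simp_all add: power_mult_distrib power2_eq_square power3_eq_cube ac_simps)
    then have "(x * t) ^ 2 \<in> R" "(x * t) ^ 3 \<in> R"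
      using x2t by simp_all
    then show ?thesis
      using sn unfolding seminormal_ext_def by blast
  qed
  then show ?thesis
    using xt[of 1] unfolding conductor_def by simp
qed

lemma seminormal_imp_semiprime_conductor:
  assumes "is_subring R" "seminormal_ext R"
  shows "semiprime_ideal (conductor R)"
  using assms by (blast intro: semiprime_idealI_power2 is_ideal_conductor seminormal_conductor_power2D)

lemma seminormal_if_semiprime_conductor:
  assumes R: "is_subring R" and sp: "semiprime_ideal (conductor R)"
    and unit_multiple: "\<And>a. a \<in> R \<Longrightarrow> \<exists>N. \<exists>c\<in>R. (1 - a * c) * a ^ N \<in> conductor R"
  shows "seminormal_ext R"
  unfolding seminormal_ext_def
proof (intro allI impI)
  fix b :: 'a
  assume b: "b ^ 2 \<in> R \<and> b ^ 3 \<in> R"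
  define a where "a = b ^ 2"
  obtain N c where c: "c \<in> R" and Nc: "(1 - a * c) * a ^ N \<in> conductor R"
    using unit_multiple b a_def by blast
  have C: "is_ideal (conductor R)"
    using sp by (simp add: semiprime_ideal_def)
  have radical: "x ^ n \<in> conductor R \<Longrightarrow> n \<ge> 1 \<Longrightarrow> x \<in> conductor R" for x n
    using sp by (auto simp: semiprime_ideal_def)
  define e where "e = a * (1 - a * c)"
  have "e ^ Suc N = ((1 - a * c) ^ N * a) * ((1 - a * c) * a ^ N)"
    unfolding e_def by (simp add: power_mult_distrib ac_simps)
  then have "e \<in> conductor R"
    using radical[of e "Suc N"] ideal_mult[OF C Nc] by simp
  moreover have "(b - b ^ 3 * c) ^ 2 = (1 - a * c) * e"
    unfolding e_def a_def by (simp add: power2_eq_square power3_eq_cube algebra_simps)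
  ultimately have "b - b ^ 3 * c \<in> conductor R"
    using radical[of _ 2] ideal_mult[OF C] by simp
  then have "b - b ^ 3 * c \<in> R"
    using conductor_subset by blast
  then have "(b - b ^ 3 * c) + b ^ 3 * c \<in> R"
    using b c R by (blast intro: subring_add subring_mult)
  then show "b \<in> R" by simp
qed

definition lin_comb :: "'a::comm_ring_1 set \<Rightarrow> ('b \<Rightarrow> 'a) \<Rightarrow> 'b set \<Rightarrow> 'a set" where
  "lin_comb R g I = {\<Sum>i\<in>I. r i * g i | r. \<forall>i\<in>I. r i \<in> R}"

definition is_submodule :: "'a::comm_ring_1 set \<Rightarrow> 'a set \<Rightarrow> bool" where
  "is_submodule R W \<longleftrightarrow> 0 \<in> W \<and> (\<forall>x\<in>W. \<forall>y\<in>W. x + y \<in> W) \<and> (\<forall>r\<in>R. \<forall>x\<in>W. r * x \<in> W)"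

lemma lin_combI: "\<forall>i\<in>I. r i \<in> R \<Longrightarrow> (\<Sum>i\<in>I. r i * g i) \<in> lin_comb R g I"
  unfolding lin_comb_def by blast

lemma submodule_zero: "is_submodule R W \<Longrightarrow> 0 \<in> W"
  and submodule_add: "is_submodule R W \<Longrightarrow> x \<in> W \<Longrightarrow> y \<in> W \<Longrightarrow> x + y \<in> W"
  and submodule_smult: "is_submodule R W \<Longrightarrow> r \<in> R \<Longrightarrow> x \<in> W \<Longrightarrow> r * x \<in> W"
  by (simp_all add: is_submodule_def)

lemma submodule_sum: "is_submodule R W \<Longrightarrow> (\<And>i. i \<in> I \<Longrightarrow> f i \<in> W) \<Longrightarrow> sum f I \<in> W"
  by (induction I rule: infinite_finite_induct) (auto intro: submodule_zero submodule_add)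

lemma is_submodule_subring: "is_subring R \<Longrightarrow> is_submodule R R"
  by (simp add: is_submodule_def is_subring_def)

lemma is_submodule_plus_cyclic:
  assumes R: "is_subring R" and W: "is_submodule R W"
  shows "is_submodule R {w + t * z |w t. w \<in> W \<and> t \<in> R}"
  unfolding is_submodule_def
proof (intro conjI ballI)
  show "0 \<in> {w + t * z |w t. w \<in> W \<and> t \<in> R}"
    using submodule_zero[OF W] subring_zero[OF R] by force
next
  fix x y
  assume "x \<in> {w + t * z |w t. w \<in> W \<and> t \<in> R}" "y \<in> {w + t * z |w t. w \<in> W \<and> t \<in> R}"
  then obtain w t w' t' where "w \<in> W" "t \<in> R" "w' \<in> W" "t' \<in> R"
    and "x + y = (w + w') + (t + t') * z"
    by (auto simp: algebra_simps)
  then show "x + y \<in> {w + t * z |w t. w \<in> W \<and> t \<in> R}"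
    using R W by (blast intro: submodule_add subring_add)
next
  fix r x
  assume "r \<in> R" "x \<in> {w + t * z |w t. w \<in> W \<and> t \<in> R}"
  then obtain w t where "w \<in> W" "t \<in> R" and "r * x = r * w + (r * t) * z"
    by (auto simp: algebra_simps)
  then show "r * x \<in> {w + t * z |w t. w \<in> W \<and> t \<in> R}"
    using R W \<open>r \<in> R\<close> by (blast intro: submodule_smult subring_mult)
qed

lemma is_submodule_lin_comb:
  assumes R: "is_subring R"
  shows "is_submodule R (lin_comb R g I)"
  unfolding is_submodule_def
proof (intro conjI ballI)
  show "0 \<in> lin_comb R g I"
    unfolding lin_comb_def using subring_zero[OF R] by (auto intro!: exI[of _ "\<lambda>_. 0"])
next
  fix x y
  assume "x \<in> lin_comb R g I" "y \<in> lin_comb R g I"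
  then obtain r q where "\<forall>i\<in>I. r i \<in> R" "\<forall>i\<in>I. q i \<in> R"
    and xy: "x + y = (\<Sum>i\<in>I. (r i + q i) * g i)"
    unfolding lin_comb_def by (auto simp: distrib_right sum.distrib)
  then have "\<forall>i\<in>I. r i + q i \<in> R"
    using R by (blast intro: subring_add)
  then show "x + y \<in> lin_comb R g I"
    unfolding xy by (rule lin_combI)
next
  fix t x
  assume t: "t \<in> R" and "x \<in> lin_comb R g I"
  then obtain r where "\<forall>i\<in>I. r i \<in> R" and tx: "t * x = (\<Sum>i\<in>I. (t * r i) * g i)"
    unfolding lin_comb_def by (auto simp: sum_distrib_left mult.assoc)
  then have "\<forall>i\<in>I. t * r i \<in> R"
    using R t by (blast intro: subring_mult)
  then show "t * x \<in> lin_comb R g I"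
    unfolding tx by (rule lin_combI)
qed

lemma lin_comb_generator:
  assumes R: "is_subring R" and I: "finite I" and i: "i \<in> I"
  shows "g i \<in> lin_comb R g I"
proof -
  have "(\<Sum>j\<in>I. (if j = i then 1 else 0) * g j) = (\<Sum>j\<in>I. if j = i then g j else 0)"
    by (rule sum.cong) auto
  also have "\<dots> = g i"
    using I i by simp
  finally have "(\<Sum>j\<in>I. (if j = i then 1 else 0) * g j) = g i" .
  then show ?thesis
    using lin_combI[of I "\<lambda>j. if j = i then 1 else 0" R g] subring_zero[OF R] subring_one[OF R]
    by simp
qed

lemma lin_comb_mult_mem:
  assumes W: "is_submodule R W" and y: "\<And>i. i \<in> I \<Longrightarrow> y * g i \<in> W"
    and x: "x \<in> lin_comb R g I"
  shows "y * x \<in> W"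
proof -
  obtain r where r: "\<forall>i\<in>I. r i \<in> R" and yx: "y * x = (\<Sum>i\<in>I. r i * (y * g i))"
    using x unfolding lin_comb_def by (auto simp: sum_distrib_left ac_simps)
  have "(\<Sum>i\<in>I. r i * (y * g i)) \<in> W"
    using r by (intro submodule_sum[OF W] submodule_smult[OF W] y) auto
  then show ?thesis
    unfolding yx .
qed

lemma lin_comb_insertD:
  assumes "x \<in> lin_comb R g (insert k I)" and "finite I" "k \<notin> I"
  shows "\<exists>m\<in>lin_comb R g I. \<exists>t\<in>R. x = m + t * g k"
  using assms unfolding lin_comb_def by (force simp: add.commute)

lemma is_subring_lin_comb:
  assumes R: "is_subring R" and one: "1 \<in> lin_comb R g I"
    and prod: "\<And>i j. i \<in> I \<Longrightarrow> j \<in> I \<Longrightarrow> g i * g j \<in> lin_comb R g I"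
  shows "is_subring (lin_comb R g I)"
proof -
  note M = is_submodule_lin_comb[OF R, of g I]
  have mult: "x * y \<in> lin_comb R g I" if "x \<in> lin_comb R g I" "y \<in> lin_comb R g I" for x y
  proof -
    have "g i * y \<in> lin_comb R g I" if "i \<in> I" for i
      using lin_comb_mult_mem[OF M prod[OF that] \<open>y \<in> lin_comb R g I\<close>] by simp
    then show ?thesis
      using lin_comb_mult_mem[OF M _ \<open>x \<in> lin_comb R g I\<close>, of y] by (simp add: mult.commute)
  qed
  have "- 1 * y \<in> lin_comb R g I" if "y \<in> lin_comb R g I" for y
    using submodule_smult[OF M subring_uminus[OF R subring_one[OF R]] that] .
  then show ?thesis
    unfolding is_subring_def
    using one submodule_zero[OF M] submodule_add[OF M] mult by (metis diff_conv_add_uminus mult_minus1)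
qed

lemma subset_lin_comb:
  assumes R: "is_subring R" and one: "1 \<in> lin_comb R g I"
  shows "R \<subseteq> lin_comb R g I"
  using submodule_smult[OF is_submodule_lin_comb[OF R] _ one] by fastforce

lemma power_in_lin_comb_powers:
  assumes R: "is_subring R" and c: "\<forall>i<d. c i \<in> R" and root: "s ^ d + (\<Sum>i<d. c i * s ^ i) = 0"
  shows "s ^ n \<in> lin_comb R ((^) s) {..<d}"
proof (induction n rule: less_induct)
  case (less n)
  show ?case
  proof (cases "n < d")
    case True
    then show ?thesis by (simp add: lin_comb_generator[OF R])
  next
    case False
    have "s ^ n = s ^ (n - d) * s ^ d"
      using False by (simp flip: power_add)
    also have "\<dots> = (\<Sum>i<d. (- c i) * s ^ (n - d + i))"
      using root by (simp add: eq_neg_iff_add_eq_0[symmetric] sum_distrib_left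
          flip: sum_negf) (simp add: power_add ac_simps)
    also have "\<dots> \<in> lin_comb R ((^) s) {..<d}"
      using False c less by (intro submodule_sum[OF is_submodule_lin_comb[OF R]]
          submodule_smult[OF is_submodule_lin_comb[OF R]] subring_uminus[OF R]) auto
    finally show ?thesis .
  qed
qed

lemma is_subring_lin_comb_powers:
  assumes R: "is_subring R" and c: "\<forall>i<d. c i \<in> R" and root: "s ^ d + (\<Sum>i<d. c i * s ^ i) = 0"
  shows "is_subring (lin_comb R ((^) s) {..<d})" and "R \<subseteq> lin_comb R ((^) s) {..<d}"
proof -
  have "s ^ i * s ^ j \<in> lin_comb R ((^) s) {..<d}" for i j
    using power_in_lin_comb_powers[OF assms, of "i + j"] by (simp add: power_add)
  moreover have "1 \<in> lin_comb R ((^) s) {..<d}"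
    using power_in_lin_comb_powers[OF assms, of 0] by simp
  ultimately show "is_subring (lin_comb R ((^) s) {..<d})" "R \<subseteq> lin_comb R ((^) s) {..<d}"
    using is_subring_lin_comb[OF R, of "(^) s" "{..<d}"] subset_lin_comb[OF R, of "(^) s" "{..<d}"] by auto
qed

lemma lin_comb_subset_Sigma:
  assumes F: "finite F" "\<And>u. u \<in> F \<Longrightarrow> finite (J u)" and R: "is_subring R" and t: "t \<in> F"
  shows "lin_comb R (g t) (J t) \<subseteq> lin_comb R (\<lambda>(u, j). g u j) (Sigma F J)"
proof
  fix x
  assume "x \<in> lin_comb R (g t) (J t)"
  then obtain r where r: "\<forall>j\<in>J t. r j \<in> R" and x: "x = (\<Sum>j\<in>J t. r j * g t j)"
    unfolding lin_comb_def by blast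
  define r' where "r' = (\<lambda>(u, j). if u = t then r j else 0)"
  have "(\<Sum>p\<in>Sigma F J. r' p * (\<lambda>(u, j). g u j) p) = (\<Sum>u\<in>F. \<Sum>j\<in>J u. r' (u, j) * g u j)"
    using F by (simp add: sum.Sigma split_def)
  also have "\<dots> = (\<Sum>u\<in>F. if u = t then x else 0)"
    unfolding x r'_def by (rule sum.cong) (auto intro: sum.cong)
  also have "\<dots> = x"
    using F t by simp
  finally show "x \<in> lin_comb R (\<lambda>(u, j). g u j) (Sigma F J)"
    using lin_combI[of "Sigma F J" r' R "\<lambda>(u, j). g u j"] r subring_zero[OF R]
    by (force simp: r'_def)
qed

lemma finitely_generated_if_integral_FIP:
  fixes R :: "'a::comm_ring_1 set"
  assumes R: "is_subring R" and int: "integral_ext R" and fip: "has_FIP R"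
  shows "\<exists>(I :: ('a \<times> nat) set) g. finite I \<and> (\<forall>x. x \<in> lin_comb R g I)"
proof -
  obtain D C where DC: "\<And>s. (\<forall>i<D s. C s i \<in> R) \<and> s ^ D s + (\<Sum>i<D s. C s i * s ^ i) = 0"
    using int unfolding integral_ext_def by metis
  define P where "P s = lin_comb R ((^) s) {..<D s}" for s
  have "range P \<subseteq> {T. is_subring T \<and> R \<subseteq> T}"
    unfolding P_def using is_subring_lin_comb_powers[OF R] DC by blast
  then have "finite (range P)"
    using fip unfolding has_FIP_def by (rule finite_subset)
  then obtain F where F: "finite F" "range P = P ` F"
    using finite_subset_image[of "range P" P UNIV] by auto
  have "x \<in> lin_comb R (\<lambda>(s, i). s ^ i) (SIGMA s:F. {..<D s})" for x
  proof -
    obtain t where "t \<in> F" "P x = P t"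
      using F(2) by (metis imageE rangeI)
    moreover have "x \<in> P x"
      using power_in_lin_comb_powers[OF R, of "D x" "C x" x 1] DC unfolding P_def by simp
    ultimately show ?thesis
      using lin_comb_subset_Sigma[OF F(1) _ R \<open>t \<in> F\<close>, where J = "\<lambda>s. {..<D s}" and g = "(^)"]
      unfolding P_def by auto
  qed
  then show ?thesis
    using F(1) by (intro exI[of _ "SIGMA s:F. {..<D s}"] exI[of _ "\<lambda>(s, i). s ^ i"]) simp
qed

definition plus_multiples :: "'a::comm_ring_1 set \<Rightarrow> 'a \<Rightarrow> 'a set" where
  "plus_multiples R z = {r + z * x |r x. r \<in> R}"

lemma plus_multiplesI: "r \<in> R \<Longrightarrow> r + z * x \<in> plus_multiples R z"
  unfolding plus_multiples_def by blast

lemma subset_plus_multiples: "R \<subseteq> plus_multiples R z"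
  using plus_multiplesI[of _ R z 0] by auto

lemma is_subring_plus_multiples:
  assumes R: "is_subring R"
  shows "is_subring (plus_multiples R z)"
  unfolding is_subring_def
proof (intro conjI ballI)
  show "0 \<in> plus_multiples R z" "1 \<in> plus_multiples R z"
    using subset_plus_multiples subring_zero[OF R] subring_one[OF R] by blast+
next
  fix x y
  assume "x \<in> plus_multiples R z" "y \<in> plus_multiples R z"
  then obtain r p r' p' where rr': "r \<in> R" "r' \<in> R" and "x = r + z * p" "y = r' + z * p'"
    unfolding plus_multiples_def by blast
  then have "x + y = (r + r') + z * (p + p')" "x - y = (r - r') + z * (p - p')"
    "x * y = r * r' + z * (r * p' + r' * p + z * p * p')"
    by (simp_all add: algebra_simps)
  then show "x + y \<in> plus_multiples R z" "x - y \<in> plus_multiples R z" "x * y \<in> plus_multiples R z"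
    unfolding plus_multiples_def using R rr' by (blast intro: subring_add subring_diff subring_mult)+
qed

lemma finite_range_nat_repeats:
  fixes f :: "nat \<Rightarrow> 'b"
  assumes "finite (range f)"
  shows "\<exists>i j. i < j \<and> f i = f j"
proof -
  obtain i j where "i \<noteq> j" "f i = f j"
    using assms finite_imageD[of f UNIV] unfolding inj_def by auto
  then show ?thesis
    by (metis linorder_neq_iff)
qed

lemma nakayama_principal:
  fixes g :: "'b \<Rightarrow> 'a::comm_ring_1"
  assumes R: "is_subring R" and a: "a \<in> R" and "is_submodule R W" and "finite I"
    and "\<And>i. i \<in> I \<Longrightarrow> \<exists>w\<in>W. \<exists>m\<in>lin_comb R g I. g i = w + a * m"
  shows "\<exists>c\<in>R. \<forall>i\<in>I. (1 - a * c) * g i \<in> W"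
  using \<open>finite I\<close> \<open>is_submodule R W\<close> assms(5)
proof (induction I arbitrary: W rule: finite_induct)
  case empty
  then show ?case using subring_zero[OF R] by blast
next
  case (insert k I)
  note W = insert.prems(1)
  define W' where "W' = {w + t * g k |w t. w \<in> W \<and> t \<in> R}"
  have W': "is_submodule R W'"
    unfolding W'_def by (rule is_submodule_plus_cyclic[OF R W])
  have split: "\<exists>m'\<in>lin_comb R g I. \<exists>t\<in>R. m = m' + t * g k" if "m \<in> lin_comb R g (insert k I)" for m
    using lin_comb_insertD[OF that insert.hyps] .
  have "\<exists>w\<in>W'. \<exists>m\<in>lin_comb R g I. g i = w + a * m" if "i \<in> I" for i
  proof -
    obtain w m' t where "w \<in> W" "m' \<in> lin_comb R g I" "t \<in> R" "g i = (w + (a * t) * g k) + a * m'"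
      using insert.prems(2)[of i] split \<open>i \<in> I\<close> by (fastforce simp: algebra_simps)
    then show ?thesis
      unfolding W'_def using a R by (blast intro: subring_mult)
  qed
  then obtain c1 where c1: "c1 \<in> R" "\<forall>i\<in>I. (1 - a * c1) * g i \<in> W'"
    using insert.IH[OF W'] by blast
  define y where "y = 1 - a * c1"
  have y: "y \<in> R"
    unfolding y_def using R a c1 by (blast intro: subring_diff subring_one subring_mult)
  obtain w0 m' t where w0: "w0 \<in> W" "m' \<in> lin_comb R g I" "t \<in> R" "g k = w0 + a * (m' + t * g k)"
    using insert.prems(2)[of k] split by blast
  obtain w3 t3 where w3: "w3 \<in> W" "t3 \<in> R" "y * m' = w3 + t3 * g k"
    using lin_comb_mult_mem[OF W' _ w0(2), of y] c1(2) unfolding W'_def y_def by blast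
  define c2 where "c2 = t3 + t * y"
  have c2: "c2 \<in> R"
    unfolding c2_def using w3 w0 y R by (blast intro: subring_add subring_mult)
  have "(y - a * c2) * g k = y * w0 + a * w3"
    using arg_cong[OF w0(4), of "(*) y"] w3(3) unfolding c2_def by (simp add: algebra_simps)
  then have k: "(y - a * c2) * g k \<in> W"
    using W w0 w3 y a by (auto intro: submodule_add submodule_smult)
  have yac2: "y - a * c2 \<in> R"
    using y a c2 R by (blast intro: subring_diff subring_mult)
  define c where "c = c1 + c1 * y + c2 * y"
  have c_unit: "1 - a * c = y * (y - a * c2)"
    unfolding c_def y_def by (simp add: algebra_simps)
  have "(1 - a * c) * g i \<in> W" if i: "i \<in> insert k I" for i
  proof (cases "i = k")
    case True
    then show ?thesis
      using submodule_smult[OF W y k] c_unit by (simp add: ac_simps)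
  next
    case False
    then obtain w t' where "w \<in> W" "t' \<in> R" "y * g i = w + t' * g k"
      using c1(2) i False unfolding W'_def y_def by auto
    then have "(1 - a * c) * g i = (y - a * c2) * w + t' * ((y - a * c2) * g k)"
      unfolding c_unit by (simp add: algebra_simps)
    then show ?thesis
      using W \<open>w \<in> W\<close> \<open>t' \<in> R\<close> k yac2 by (auto intro: submodule_add submodule_smult)
  qed
  moreover have "c \<in> R"
    unfolding c_def using c1 c2 y R by (blast intro: subring_add subring_mult)
  ultimately show ?case by blast
qed

lemma FIP_unit_multiple_power_in_conductor:
  assumes R: "is_subring R" and fip: "has_FIP R" and I: "finite I"
    and gen: "\<And>x. x \<in> lin_comb R g I" and a: "a \<in> R"
  shows "\<exists>N. \<exists>c\<in>R. (1 - a * c) * a ^ N \<in> conductor R"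
proof -
  have "range (\<lambda>k. plus_multiples R (a ^ k)) \<subseteq> {T. is_subring T \<and> R \<subseteq> T}"
    using is_subring_plus_multiples[OF R] subset_plus_multiples by blast
  then have "finite (range (\<lambda>k. plus_multiples R (a ^ k)))"
    using fip unfolding has_FIP_def by (rule finite_subset)
  then obtain i j where ij: "i < j" "plus_multiples R (a ^ i) = plus_multiples R (a ^ j)"
    using finite_range_nat_repeats by blast
  define h where "h m = a ^ i * g m" for m
  have ai_mult: "a ^ i * x \<in> lin_comb R h I" for x
    using lin_comb_mult_mem[OF is_submodule_lin_comb[OF R] _ gen]
      lin_comb_generator[OF R I, of _ h] unfolding h_def by blast
  have "\<exists>w\<in>R. \<exists>m\<in>lin_comb R h I. h l = w + a * m" if "l \<in> I" for l
  proof -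
    have "h l \<in> plus_multiples R (a ^ j)"
      unfolding h_def ij(2)[symmetric] using plus_multiplesI[OF subring_zero[OF R]] by simp
    then obtain r x where "r \<in> R" "h l = r + a ^ j * x"
      unfolding plus_multiples_def by blast
    moreover have "j = Suc (i + (j - i - 1))"
      using ij(1) by simp
    then have "a ^ j * x = a * (a ^ i * (a ^ (j - i - 1) * x))"
      by (metis power_Suc power_add mult.assoc)
    ultimately show ?thesis
      using ai_mult by metis
  qed
  then obtain c where c: "c \<in> R" "\<forall>l\<in>I. (1 - a * c) * h l \<in> R"
    using nakayama_principal[OF R a is_submodule_subring[OF R] I] by blast
  have unit_mult: "(1 - a * c) * a ^ i * x \<in> R" for x
    using lin_comb_mult_mem[OF is_submodule_subring[OF R] _ gen, of "(1 - a * c) * a ^ i"] c(2)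
    unfolding h_def by (simp add: ac_simps)
  then have "(1 - a * c) * a ^ i \<in> conductor R"
    using unit_mult[of 1] unfolding conductor_def by simp
  then show ?thesis
    using c(1) by blast
qed

theorem proposition3p2:
  fixes R :: "'a::comm_ring_1 set"
  assumes "is_subring R"
    and "integral_ext R"
    and "has_FIP R"
  shows "seminormal_ext R \<longleftrightarrow> semiprime_ideal (conductor R)"
proof
  assume "seminormal_ext R"
  then show "semiprime_ideal (conductor R)"
    by (rule seminormal_imp_semiprime_conductor[OF assms(1)])
next
  assume sp: "semiprime_ideal (conductor R)"
  obtain I :: "('a \<times> nat) set" and g where I: "finite I" and gen: "\<And>x. x \<in> lin_comb R g I"
    using finitely_generated_if_integral_FIP[OF assms] by blast
  show "seminormal_ext R"
    using seminormal_if_semiprime_conductor[OF assms(1) sp]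
      FIP_unit_multiple_power_in_conductor[OF assms(1,3) I gen] .
qed

end
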